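(* Let $N\ge 1$ be an integer and let $T\geq N^{3}$. Then in the $T$-period forecasting game with forecast grid $D=\{1/(2N),3/(2N),\dots,(2N-1)/(2N)\}$ there exists a mixed strategy of the forecaster such that $\mathbb{E}[K_T]\le 1/N$ against every mixed strategy of the rainmaker.
   Context: Forecasting game: fix a positive integer $N$, the grid $D=\{1/(2N),3/(2N),\dots,(2N-1)/(2N)\}\subset[0,1]$ (which has $N$ points), and a horizon $T$. In each period $t=1,\dots,T$ the rainmaker chooses the weather $a_t\in\{0,1\}$ (1 = rain) and the forecaster chooses a forecast $c_t\in D$; both players have perfect recall, i.e. each may condition its period-$t$ choice on the full history $h_{t-1}=(a_1,c_1,\dots,a_{t-1},c_{t-1})\in(\{0,1\}\times D)^{t-1}$. A pure strategy of a player is a map from histories to its choice set; a mixed strategy is a probability distribution over its (finitely many) pure strategies. For $d\in D$ let $n(d)=\sum_{t=1}^T \mathbf 1_{c_t=d}$ and, when $n(d)>0$, $\bar a(d)=\frac{1}{n(d)}\sum_{t=1}^T\mathbf 1_{c_t=d}\,a_t$. The calibration score is $K_T=\sum_{d\in D}\frac{n(d)}{T}\,|\bar a(d)-d|$ (terms with $n(d)=0$ are $0$); equivalently $K_T=\frac1T\sum_{d\in D}\big|\sum_{t=1}^T\mathbf 1_{c_t=d}(a_t-d)\big|$. Expectations are over the random choices of both players. *)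

theory Defs
  imports "HOL-Probability.Probability"
begin

text \<open>Histories: lists of (weather, forecast) pairs; weather True = rain (a = 1).\<close>
type_synonym history = "(bool \<times> real) list"
type_synonym rain_strategy = "history \<Rightarrow> bool"
type_synonym fc_strategy = "history \<Rightarrow> real"

definition grid :: "nat \<Rightarrow> real set" where
  "grid N = {(2 * real k + 1) / (2 * real N) | k. k < N}"

fun play :: "rain_strategy \<Rightarrow> fc_strategy \<Rightarrow> nat \<Rightarrow> history" where
  "play f g 0 = []"
| "play f g (Suc t) = (let h = play f g t in h @ [(f h, g h)])"

text \<open>Calibration score K_T of a history of length T (period t is entry t, 0-based).\<close>
definition calib :: "nat \<Rightarrow> nat \<Rightarrow> history \<Rightarrow> real" where
  "calib N T h = (1 / real T) * (\<Sum>d\<in>grid N.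
      \<bar>\<Sum>t<T. (if snd (h ! t) = d then of_bool (fst (h ! t)) - d else 0)\<bar>)"

definition fc_pure :: "nat \<Rightarrow> fc_strategy \<Rightarrow> bool" where
  "fc_pure N g \<longleftrightarrow> (\<forall>h. g h \<in> grid N)"

definition fc_mixed :: "nat \<Rightarrow> fc_strategy pmf \<Rightarrow> bool" where
  "fc_mixed N \<tau> \<longleftrightarrow> finite (set_pmf \<tau>) \<and> (\<forall>g\<in>set_pmf \<tau>. fc_pure N g)"

definition rain_mixed :: "rain_strategy pmf \<Rightarrow> bool" where
  "rain_mixed \<sigma> \<longleftrightarrow> finite (set_pmf \<sigma>)"

definition expected_K :: "nat \<Rightarrow> nat \<Rightarrow> rain_strategy pmf \<Rightarrow> fc_strategy pmf \<Rightarrow> real" where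
  "expected_K N T \<sigma> \<tau> =
     measure_pmf.expectation (pair_pmf \<sigma> \<tau>) (\<lambda>(f, g). calib N T (play f g T))"

end

theory Submission
  imports Defs
begin

text \<open>With \<open>S\<^sub>d\<close> the signed calibration sum and \<open>n\<^sub>d\<close> the number of forecasts of
  grid point \<open>d\<close>, the forecaster keeps the potential
  \<open>\<Psi> = \<Sum>\<^sub>d max(\<bar>S\<^sub>d\<bar> - n\<^sub>d/(2N), 0)\<^sup>2\<close> small. If it forecast the grid point nearest to
  the rain probability \<open>p\<close>, the expected increase of \<open>\<Psi>\<close> would be at most \<open>p(1 - p) \<le> 1/4\<close>,
  the rounding error being absorbed by the tolerance \<open>n\<^sub>d/(2N)\<close>. Since \<open>p\<close> is unknown, a
  minimax argument for the two-row game "rain or not" turns this into a randomisation over two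
  grid points that achieves increase at most \<open>1/4\<close> against either outcome. Hence
  \<open>E \<Psi>\<^sub>T \<le> T/4\<close>, and the AM-GM inequality converts this into
  \<open>E K\<^sub>T \<le> N\<^sup>2/(4T) + 3/(4N) \<le> 1/N\<close> for \<open>T \<ge> N\<^sup>3\<close>.\<close>

lemma mixture_below_both:
  fixes x0 x1 y0 y1 K :: real
  assumes "x0 \<le> K" "K < y0" "(y0 - K) * (x1 - K) \<le> (K - x0) * (K - y1)"
  shows "\<exists>l. 0 \<le> l \<and> l \<le> 1 \<and> l * x0 + (1 - l) * y0 \<le> K \<and> l * x1 + (1 - l) * y1 \<le> K"
proof -
  define l where "l = (y0 - K) / (y0 - x0)"
  have pos: "y0 - x0 > 0" using assms by simp
  have l_eq: "l * (y0 - x0) = y0 - K" using pos by (simp add: l_def)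
  then have first: "l * x0 + (1 - l) * y0 = K" by (simp add: algebra_simps)
  have "(l * x1 + (1 - l) * y1 - K) * (y0 - x0)
      = (l * (y0 - x0)) * (x1 - y1) + (y1 - K) * (y0 - x0)" by (simp add: algebra_simps)
  also have "\<dots> = (y0 - K) * (x1 - K) - (K - x0) * (K - y1)" unfolding l_eq by (simp add: algebra_simps)
  finally have "l * x1 + (1 - l) * y1 \<le> K"
    using assms(3) pos by (smt (verit) mult_le_0_iff)
  moreover have "0 \<le> l" "l \<le> 1" using assms by (auto simp: l_def)
  ultimately show ?thesis using first by auto
qed

lemma threshold_crossing:
  fixes C :: "'c set" and A :: "bool \<Rightarrow> 'c \<Rightarrow> real"
  assumes fin: "finite C"
    and cover: "\<And>p. 0 \<le> p \<Longrightarrow> p \<le> 1 \<Longrightarrow> \<exists>c\<in>C. p * A True c + (1 - p) * A False c \<le> K"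
    and no_common: "\<And>c. c \<in> C \<Longrightarrow> A False c \<le> K \<Longrightarrow> K < A True c"
  shows "\<exists>d\<in>C. \<exists>e\<in>C. A False d \<le> K \<and> K < A False e \<and>
           (A False e - K) * (A True d - K) \<le> (K - A False d) * (K - A True e)"
proof -
  define D0 where "D0 = {c\<in>C. A False c \<le> K}"
  define D1 where "D1 = {c\<in>C. A True c \<le> K}"
  have D0: "A False c \<le> K \<and> K < A True c" if "c \<in> D0" for c
    using no_common that by (auto simp: D0_def)
  have D1: "A True c \<le> K \<and> K < A False c" if "c \<in> D1" for c
    using no_common that by (force simp: D1_def)
  define r where "r c = (K - A False c) / (A True c - A False c)" for c
  define l where "l c = (A False c - K) / (A False c - A True c)" for c
  have r_iff: "p * A True c + (1 - p) * A False c \<le> K \<longleftrightarrow> p \<le> r c" if "c \<in> D0" for c p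
    using D0[OF that] by (simp add: r_def pos_le_divide_eq algebra_simps)
  have l_iff: "p * A True c + (1 - p) * A False c \<le> K \<longleftrightarrow> l c \<le> p" if "c \<in> D1" for c p
    using D1[OF that] by (simp add: l_def pos_divide_le_eq algebra_simps)
  have "D0 \<noteq> {}" "D1 \<noteq> {}" using cover[of 0] cover[of 1] by (auto simp: D0_def D1_def)
  moreover have "finite D0" "finite D1" using fin by (auto simp: D0_def D1_def)
  ultimately obtain d e where "is_arg_min (\<lambda>c. - r c) (\<lambda>c. c \<in> D0) d" "is_arg_min l (\<lambda>c. c \<in> D1) e"
    using ex_is_arg_min_if_finite by metis
  then have d: "d \<in> D0" "\<And>c. c \<in> D0 \<Longrightarrow> r c \<le> r d"
    and e: "e \<in> D1" "\<And>c. c \<in> D1 \<Longrightarrow> l e \<le> l c"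
    by (auto simp: is_arg_min_linorder)
  \<comment> \<open>by \<open>cover\<close>, the intervals \<open>[0, r c]\<close> for \<open>c \<in> D0\<close> and \<open>[l c, 1]\<close> for \<open>c \<in> D1\<close> cover \<open>[0, 1]\<close>\<close>
  have "l e \<le> r d"
  proof (rule ccontr)
    assume "\<not> l e \<le> r d"
    define p where "p = (l e + r d) / 2"
    have "r d < p" "p < l e" using \<open>\<not> l e \<le> r d\<close> by (auto simp: p_def)
    moreover have "0 \<le> r d" "l e \<le> 1" using D0[OF d(1)] D1[OF e(1)] by (auto simp: r_def l_def)
    ultimately obtain c where c: "c \<in> C" "p * A True c + (1 - p) * A False c \<le> K"
      using cover[of p] by auto
    show False
    proof (cases "c \<in> D0 \<or> c \<in> D1")
      case True
      then show False using c r_iff l_iff d(2) e(2) \<open>r d < p\<close> \<open>p < l e\<close> by force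
    next
      case False
      then have "K < A True c" "K < A False c" using c(1) by (auto simp: D0_def D1_def)
      then have "p * (- A True c) + (1 - p) * (- A False c) < - K"
        using \<open>0 \<le> r d\<close> \<open>r d < p\<close> \<open>p < l e\<close> \<open>l e \<le> 1\<close> by (intro convex_bound_lt) auto
      then show False using c(2) by simp
    qed
  qed
  then have "(A False e - K) * (A True d - A False d) \<le> (K - A False d) * (A False e - A True e)"
    using D0[OF d(1)] D1[OF e(1)] by (simp add: l_def r_def divide_simps)
  then show ?thesis
    using d(1) e(1) D0[OF d(1)] D1[OF e(1)] unfolding D0_def D1_def
    by (intro bexI[of _ d] bexI[of _ e]) (auto simp: algebra_simps)
qed

lemma two_point_minimax:
  fixes C :: "'c set" and A :: "bool \<Rightarrow> 'c \<Rightarrow> real"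
  assumes fin: "finite C"
    and cover: "\<And>p. 0 \<le> p \<Longrightarrow> p \<le> 1 \<Longrightarrow> \<exists>c\<in>C. p * A True c + (1 - p) * A False c \<le> K"
  shows "\<exists>d\<in>C. \<exists>e\<in>C. \<exists>l. 0 \<le> l \<and> l \<le> 1 \<and> (\<forall>a. l * A a d + (1 - l) * A a e \<le> K)"
proof (cases "\<exists>c\<in>C. A False c \<le> K \<and> A True c \<le> K")
  case True
  then obtain c where "c \<in> C" "A False c \<le> K" "A True c \<le> K" by blast
  then show ?thesis by (intro bexI[of _ c] exI[of _ 1]) (auto intro: bool.induct)
next
  case False
  then obtain d e where "d \<in> C" "e \<in> C" "A False d \<le> K" "K < A False e"
    "(A False e - K) * (A True d - K) \<le> (K - A False d) * (K - A True e)"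
    using threshold_crossing[OF fin cover] by force
  moreover from this obtain l where "0 \<le> l" "l \<le> 1"
    "l * A False d + (1 - l) * A False e \<le> K" "l * A True d + (1 - l) * A True e \<le> K"
    using mixture_below_both by blast
  ultimately show ?thesis by (intro bexI[of _ d] bexI[of _ e] exI[of _ l]) (auto intro: bool.induct)
qed

lemma excess_add_le:
  fixes s y k :: real
  assumes "k \<ge> 0"
  shows "max (\<bar>s + y\<bar> - k) 0 \<le> \<bar>max (\<bar>s\<bar> - k) 0 + (if s \<ge> 0 then 1 else -1) * y\<bar>"
  using assms by (cases "s \<ge> 0"; cases "s + y \<ge> 0"; cases "\<bar>s\<bar> \<ge> k") auto

lemma expected_excess_square_increment:
  fixes s k w p c :: real
  assumes k: "k \<ge> 0" and p: "0 \<le> p" "p \<le> 1" and pc: "\<bar>p - c\<bar> \<le> w"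
  shows "p * (max (\<bar>s + 1 - c\<bar> - (k + w)) 0)\<^sup>2 + (1 - p) * (max (\<bar>s - c\<bar> - (k + w)) 0)\<^sup>2
         \<le> (max (\<bar>s\<bar> - k) 0)\<^sup>2 + 1/4"
proof -
  define H where "H = max (\<bar>s\<bar> - k) 0"
  define \<sigma> where "\<sigma> = (if s \<ge> 0 then 1 else -1::real)"
  \<comment> \<open>forecasting \<open>c\<close> instead of \<open>p\<close> is paid for by the extra tolerance \<open>w\<close>\<close>
  have rain: "(max (\<bar>s + 1 - c\<bar> - (k + w)) 0)\<^sup>2 \<le> (H + \<sigma> * (1 - p))\<^sup>2"
  proof -
    have "max (\<bar>s + 1 - c\<bar> - (k + w)) 0 \<le> max (\<bar>s + (1 - p)\<bar> - k) 0"
      using pc by (auto simp: abs_if split: if_splits)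
    also have "\<dots> \<le> \<bar>H + \<sigma> * (1 - p)\<bar>" unfolding H_def \<sigma>_def by (rule excess_add_le[OF k])
    finally show ?thesis by (metis abs_le_square_iff abs_of_nonneg max.cobounded2)
  qed
  have dry: "(max (\<bar>s - c\<bar> - (k + w)) 0)\<^sup>2 \<le> (H + \<sigma> * (- p))\<^sup>2"
  proof -
    have "max (\<bar>s - c\<bar> - (k + w)) 0 \<le> max (\<bar>s + (- p)\<bar> - k) 0"
      using pc by (auto simp: abs_if split: if_splits)
    also have "\<dots> \<le> \<bar>H + \<sigma> * (- p)\<bar>" unfolding H_def \<sigma>_def by (rule excess_add_le[OF k])
    finally show ?thesis by (metis abs_le_square_iff abs_of_nonneg max.cobounded2)
  qed
  have "p * (max (\<bar>s + 1 - c\<bar> - (k + w)) 0)\<^sup>2 + (1 - p) * (max (\<bar>s - c\<bar> - (k + w)) 0)\<^sup>2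
     \<le> p * (H + \<sigma> * (1 - p))\<^sup>2 + (1 - p) * (H + \<sigma> * (- p))\<^sup>2"
    using rain dry p by (intro add_mono mult_left_mono) auto
  also have "\<dots> = H\<^sup>2 + \<sigma>\<^sup>2 * (p * (1 - p))"
    by (simp add: power2_eq_square algebra_simps)
  also have "\<dots> = H\<^sup>2 + 1/4 - (p - 1/2)\<^sup>2"
    by (simp add: \<sigma>_def power2_eq_square algebra_simps)
  also have "\<dots> \<le> H\<^sup>2 + 1/4" by simp
  finally show ?thesis unfolding H_def .
qed

lemma grid_eq_image: "grid N = (\<lambda>k. (2 * real k + 1) / (2 * real N)) ` {..<N}"
  unfolding grid_def by auto

lemma finite_grid: "finite (grid N)"
  by (simp add: grid_eq_image)

lemma card_grid_le: "card (grid N) \<le> N"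
  using card_image_le[of "{..<N}"] by (simp add: grid_eq_image)

lemma grid_nearest:
  assumes N: "N \<ge> 1" and p: "0 \<le> p" "p \<le> 1"
  obtains c where "c \<in> grid N" "\<bar>p - c\<bar> \<le> 1 / (2 * real N)"
proof -
  define k where "k = min (nat \<lfloor>p * N\<rfloor>) (N - 1)"
  have "k < N" using N by (simp add: k_def)
  have "real (nat \<lfloor>p * N\<rfloor>) \<le> p * N" "p * N < real (nat \<lfloor>p * N\<rfloor>) + 1" "p * N \<le> N"
    using p by (simp_all add: mult_left_le_one_le)
  then have "real k \<le> p * N" "p * N \<le> real k + 1"
    using N by (auto simp: k_def min_def of_nat_diff)
  define c where "c = (2 * real k + 1) / (2 * real N)"
  have Np: "real N > 0" using N by simp
  have "p - c = (2 * (p * N - real k) - 1) / (2 * real N)"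
    using Np by (simp add: c_def field_simps)
  moreover have "\<bar>2 * (p * N - real k) - 1\<bar> \<le> 1"
    using \<open>real k \<le> p * N\<close> \<open>p * N \<le> real k + 1\<close> by auto
  ultimately have "\<bar>p - c\<bar> \<le> 1 / (2 * real N)"
    using Np by (simp add: divide_right_mono)
  moreover have "c \<in> grid N" using \<open>k < N\<close> by (auto simp: grid_def c_def)
  ultimately show ?thesis using that by blast
qed

definition calib_sum :: "real \<Rightarrow> history \<Rightarrow> real" where
  "calib_sum d h = (\<Sum>(a, c)\<leftarrow>h. if c = d then of_bool a - d else 0)"

definition forecast_count :: "real \<Rightarrow> history \<Rightarrow> real" where
  "forecast_count d h = (\<Sum>(a, c)\<leftarrow>h. if c = d then 1 else 0)"

definition excess :: "nat \<Rightarrow> real \<Rightarrow> history \<Rightarrow> real" where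
  "excess N d h = max (\<bar>calib_sum d h\<bar> - forecast_count d h / (2 * real N)) 0"

definition potential :: "nat \<Rightarrow> history \<Rightarrow> real" where
  "potential N h = (\<Sum>d\<in>grid N. (excess N d h)\<^sup>2)"

lemma potential_Nil [simp]: "potential N [] = 0"
  by (simp add: potential_def excess_def calib_sum_def forecast_count_def)

lemma potential_nonneg: "potential N h \<ge> 0"
  by (simp add: potential_def sum_nonneg)

lemma forecast_count_nonneg: "forecast_count d h \<ge> 0"
  by (induction h) (auto simp: forecast_count_def)

lemma potential_snoc:
  assumes "c \<in> grid N"
  shows "potential N (h @ [(a, c)]) = potential N h - (excess N c h)\<^sup>2 + (excess N c (h @ [(a, c)]))\<^sup>2"
proof -
  have "potential N (h @ [(a, c)]) = (\<Sum>d\<in>grid N. (excess N d h)\<^sup>2 +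
          (if d = c then (excess N c (h @ [(a, c)]))\<^sup>2 - (excess N c h)\<^sup>2 else 0))"
    unfolding potential_def by (intro sum.cong) (auto simp: excess_def calib_sum_def forecast_count_def)
  then show ?thesis
    using assms by (simp add: sum.distrib potential_def finite_grid)
qed

lemma sum_forecast_count_le: "(\<Sum>d\<in>grid N. forecast_count d h) \<le> length h"
proof (induction h)
  case (Cons x h)
  have "(\<Sum>d\<in>grid N. forecast_count d (x # h))
      = (\<Sum>d\<in>grid N. forecast_count d h) + (\<Sum>d\<in>grid N. if snd x = d then 1 else 0)"
    by (simp add: forecast_count_def sum.distrib case_prod_beta eq_commute)
  also have "(\<Sum>d\<in>grid N. if snd x = d then 1 else 0) \<le> (1::real)"
    by (simp add: finite_grid)
  finally show ?case using Cons by simp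
qed (simp add: forecast_count_def)

lemma pmf_expectation_mono:
  fixes f g :: "'a \<Rightarrow> real"
  assumes "finite (set_pmf M)" "\<And>x. x \<in> set_pmf M \<Longrightarrow> f x \<le> g x"
  shows "measure_pmf.expectation M f \<le> measure_pmf.expectation M g"
  using assms by (intro integral_mono_AE integrable_measure_pmf_finite AE_pmfI)

lemma pmf_expectation_affine:
  fixes f :: "'a \<Rightarrow> real"
  assumes "finite (set_pmf M)"
  shows "measure_pmf.expectation M (\<lambda>x. a * f x + b) = a * measure_pmf.expectation M f + b"
  using assms by (simp add: integrable_measure_pmf_finite)

lemma pmf_expectation_pair:
  fixes F :: "'a \<times> 'b \<Rightarrow> real"
  assumes A: "finite (set_pmf A)" and B: "finite (set_pmf B)"
  shows "measure_pmf.expectation (pair_pmf A B) F =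
         measure_pmf.expectation A (\<lambda>a. measure_pmf.expectation B (\<lambda>b. F (a, b)))"
proof -
  have "measure_pmf.expectation (pair_pmf A B) F
      = (\<Sum>x\<in>set_pmf A \<times> set_pmf B. F x * pmf (pair_pmf A B) x)"
    by (rule integral_measure_pmf_real) (use A B in auto)
  also have "\<dots> = (\<Sum>a\<in>set_pmf A. \<Sum>b\<in>set_pmf B. F (a, b) * (pmf A a * pmf B b))"
    by (subst sum.cartesian_product) (auto intro!: sum.cong simp: pmf_pair)
  also have "\<dots> = (\<Sum>a\<in>set_pmf A. (\<Sum>b\<in>set_pmf B. F (a, b) * pmf B b) * pmf A a)"
    by (simp add: sum_distrib_left sum_distrib_right mult_ac)
  finally show ?thesis
    using A B by (simp add: integral_measure_pmf_real)
qed

lemma pmf_expectation_pair_swap: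
  fixes F :: "'a \<times> 'b \<Rightarrow> real"
  assumes A: "finite (set_pmf A)" and B: "finite (set_pmf B)"
  shows "measure_pmf.expectation (pair_pmf A B) F =
         measure_pmf.expectation B (\<lambda>b. measure_pmf.expectation A (\<lambda>a. F (a, b)))"
  using pmf_expectation_pair[OF B A, of "\<lambda>(b, a). F (a, b)"]
  by (simp add: pair_commute_pmf[of A B] case_prod_unfold)

lemma exists_calibrating_step:
  assumes N: "N \<ge> 1"
  shows "\<exists>q. set_pmf q \<subseteq> grid N \<and>
           (\<forall>a. measure_pmf.expectation q (\<lambda>c. potential N (h @ [(a, c)])) \<le> potential N h + 1/4)"
proof -
  let ?A = "\<lambda>a c. potential N (h @ [(a, c)])"
  have cover: "\<exists>c\<in>grid N. p * ?A True c + (1 - p) * ?A False c \<le> potential N h + 1/4"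
    if p: "0 \<le> p" "p \<le> 1" for p
  proof -
    obtain c where c: "c \<in> grid N" "\<bar>p - c\<bar> \<le> 1 / (2 * real N)"
      using grid_nearest[OF N p] .
    define k where "k = forecast_count c h / (2 * real N)"
    have k: "k \<ge> 0" by (simp add: k_def forecast_count_nonneg)
    have excess_snoc: "excess N c (h @ [(a, c)])
        = max (\<bar>calib_sum c h + of_bool a - c\<bar> - (k + 1 / (2 * real N))) 0" for a
      by (simp add: excess_def calib_sum_def forecast_count_def k_def add_divide_distrib)
    have "p * (excess N c (h @ [(True, c)]))\<^sup>2 + (1 - p) * (excess N c (h @ [(False, c)]))\<^sup>2
        \<le> (excess N c h)\<^sup>2 + 1/4"
      using expected_excess_square_increment[OF k p c(2), of "calib_sum c h"]
      unfolding excess_snoc excess_def[of N c h] k_def[symmetric] by simp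
    then have "p * ?A True c + (1 - p) * ?A False c \<le> potential N h + 1/4"
      by (simp add: potential_snoc[OF c(1)] algebra_simps)
    with c(1) show ?thesis by blast
  qed
  obtain d e l where de: "d \<in> grid N" "e \<in> grid N" and l: "0 \<le> l" "l \<le> 1"
    and mix: "\<And>a. l * ?A a d + (1 - l) * ?A a e \<le> potential N h + 1/4"
    using two_point_minimax[OF finite_grid, where A = ?A, OF cover] by blast
  define q where "q = map_pmf (\<lambda>b. if b then d else e) (bernoulli_pmf l)"
  have "measure_pmf.expectation q (?A a) = l * ?A a d + (1 - l) * ?A a e" for a
    using l by (simp add: q_def)
  moreover have "set_pmf q \<subseteq> grid N" using de by (auto simp: q_def)
  ultimately show ?thesis using mix by metis
qed

definition calibrating_step :: "nat \<Rightarrow> history \<Rightarrow> real pmf" where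
  "calibrating_step N h = (SOME q. set_pmf q \<subseteq> grid N \<and>
     (\<forall>a. measure_pmf.expectation q (\<lambda>c. potential N (h @ [(a, c)])) \<le> potential N h + 1/4))"

lemma
  assumes "N \<ge> 1"
  shows set_calibrating_step: "set_pmf (calibrating_step N h) \<subseteq> grid N"
    and expected_potential_calibrating_step:
      "measure_pmf.expectation (calibrating_step N h) (\<lambda>c. potential N (h @ [(a, c)]))
         \<le> potential N h + 1/4"
  using someI_ex[OF exists_calibrating_step[OF assms]] unfolding calibrating_step_def by blast+

definition grid_histories :: "nat \<Rightarrow> nat \<Rightarrow> history set" where
  "grid_histories N t = {h. length h = t \<and> set h \<subseteq> UNIV \<times> grid N}"

lemma finite_grid_histories: "finite (grid_histories N t)"
proof -
  have "finite {h :: history. set h \<subseteq> UNIV \<times> grid N \<and> length h = t}"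
    by (rule finite_lists_length_eq) (simp add: finite_grid)
  then show ?thesis by (simp add: grid_histories_def conj_commute)
qed

lemma lowest_grid_point: "N \<ge> 1 \<Longrightarrow> 1 / (2 * real N) \<in> grid N"
  unfolding grid_def by (intro CollectI exI[of _ 0]) auto

text \<open>The forecaster's mixed strategy realises the behavioural strategy \<open>calibrating_step\<close>:
  for every period \<open>t\<close> and every history of length \<open>t\<close> it draws the forecast independently
  in advance, as in Kuhn's theorem; histories that cannot occur get a default grid point.\<close>

definition step_table :: "nat \<Rightarrow> nat \<Rightarrow> (history \<Rightarrow> real) pmf" where
  "step_table N t = Pi_pmf (grid_histories N t) (1 / (2 * real N)) (calibrating_step N)"

definition strategy_table :: "nat \<Rightarrow> nat \<Rightarrow> (nat \<Rightarrow> history \<Rightarrow> real) pmf" where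
  "strategy_table N T = Pi_pmf {..<T} (\<lambda>_. 1 / (2 * real N)) (step_table N)"

definition table_strategy :: "(nat \<Rightarrow> history \<Rightarrow> real) \<Rightarrow> fc_strategy" where
  "table_strategy \<Phi> h = \<Phi> (length h) h"

definition calibrating_forecaster :: "nat \<Rightarrow> nat \<Rightarrow> fc_strategy pmf" where
  "calibrating_forecaster N T = map_pmf table_strategy (strategy_table N T)"

lemma
  assumes N: "N \<ge> 1"
  shows finite_set_step_table: "finite (set_pmf (step_table N t))"
    and set_step_table: "y \<in> set_pmf (step_table N t) \<Longrightarrow> y h \<in> grid N"
proof -
  have set_eq: "set_pmf (step_table N t)
      = PiE_dflt (grid_histories N t) (1 / (2 * real N)) (set_pmf \<circ> calibrating_step N)"
    unfolding step_table_def by (rule set_Pi_pmf[OF finite_grid_histories])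
  show "finite (set_pmf (step_table N t))" unfolding set_eq
    using set_calibrating_step[OF N] finite_grid finite_grid_histories
    by (intro finite_PiE_dflt) (auto intro: finite_subset)
  show "y h \<in> grid N" if "y \<in> set_pmf (step_table N t)"
    using that set_calibrating_step[OF N] lowest_grid_point[OF N]
    unfolding set_eq PiE_dflt_def by (cases "h \<in> grid_histories N t") auto
qed

lemma
  assumes N: "N \<ge> 1"
  shows finite_set_strategy_table: "finite (set_pmf (strategy_table N T))"
    and set_strategy_table: "\<Phi> \<in> set_pmf (strategy_table N T) \<Longrightarrow> \<Phi> t h \<in> grid N"
proof -
  have set_eq: "set_pmf (strategy_table N T)
      = PiE_dflt {..<T} (\<lambda>_. 1 / (2 * real N)) (set_pmf \<circ> step_table N)"
    unfolding strategy_table_def by (rule set_Pi_pmf) simp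
  show "finite (set_pmf (strategy_table N T))" unfolding set_eq
    using finite_set_step_table[OF N] by (intro finite_PiE_dflt) auto
  show "\<Phi> t h \<in> grid N" if "\<Phi> \<in> set_pmf (strategy_table N T)"
    using that set_step_table[OF N] lowest_grid_point[OF N]
    unfolding set_eq PiE_dflt_def by (cases "t < T") auto
qed

lemma calibrating_forecaster_mixed: "N \<ge> 1 \<Longrightarrow> fc_mixed N (calibrating_forecaster N T)"
  by (auto simp: fc_mixed_def fc_pure_def calibrating_forecaster_def table_strategy_def
      finite_set_strategy_table set_strategy_table)

lemma length_play: "length (play f g t) = t"
  by (induction t) (auto simp: Let_def)

lemma set_play_subset: "(\<And>h. g h \<in> grid N) \<Longrightarrow> set (play f g t) \<subseteq> UNIV \<times> grid N"
  by (induction t) (auto simp: Let_def)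

lemma play_table_strategy_cong:
  "(\<And>i. i < t \<Longrightarrow> \<Phi> i = \<Phi>' i) \<Longrightarrow> play f (table_strategy \<Phi>) t = play f (table_strategy \<Phi>') t"
proof (induction t)
  case (Suc t)
  then have "play f (table_strategy \<Phi>) t = play f (table_strategy \<Phi>') t" by simp
  moreover have "table_strategy \<Phi> (play f (table_strategy \<Phi>) t)
      = table_strategy \<Phi>' (play f (table_strategy \<Phi>) t)"
    using Suc.prems by (simp add: table_strategy_def length_play)
  ultimately show ?case by (simp add: Let_def)
qed simp

lemma expected_potential_step_table:
  assumes N: "N \<ge> 1" and h: "h \<in> grid_histories N t"
  shows "measure_pmf.expectation (step_table N t) (\<lambda>y. potential N (h @ [(a, y h)]))
           \<le> potential N h + 1/4"
proof -
  have "map_pmf (\<lambda>y. y h) (step_table N t) = calibrating_step N h"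
    unfolding step_table_def using h by (simp add: Pi_pmf_component[OF finite_grid_histories])
  then have "measure_pmf.expectation (step_table N t) (\<lambda>y. potential N (h @ [(a, y h)]))
      = measure_pmf.expectation (calibrating_step N h) (\<lambda>c. potential N (h @ [(a, c)]))"
    using integral_map_pmf[of "\<lambda>y. y h" "step_table N t" "\<lambda>c. potential N (h @ [(a, c)])"]
    by simp
  also have "\<dots> \<le> potential N h + 1/4"
    by (rule expected_potential_calibrating_step[OF N])
  finally show ?thesis .
qed

lemma expected_potential_le:
  assumes N: "N \<ge> 1"
  shows "measure_pmf.expectation (strategy_table N t) (\<lambda>\<Phi>. potential N (play f (table_strategy \<Phi>) t))
           \<le> real t / 4"
proof (induction t)
  case (Suc t)
  let ?Y = "step_table N t" and ?P = "strategy_table N t"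
  let ?pot = "\<lambda>t \<Phi>. potential N (play f (table_strategy \<Phi>) t)"
  have finY: "finite (set_pmf ?Y)" and finP: "finite (set_pmf ?P)"
    using finite_set_step_table[OF N] finite_set_strategy_table[OF N] .
  have "strategy_table N (Suc t) = map_pmf (\<lambda>(y, \<Phi>). \<Phi>(t := y)) (pair_pmf ?Y ?P)"
    unfolding strategy_table_def lessThan_Suc by (rule Pi_pmf_insert) auto
  then have "measure_pmf.expectation (strategy_table N (Suc t)) (?pot (Suc t))
      = measure_pmf.expectation ?P (\<lambda>\<Phi>. measure_pmf.expectation ?Y (\<lambda>y. ?pot (Suc t) (\<Phi>(t := y))))"
    by (simp add: pmf_expectation_pair_swap[OF finY finP] case_prod_unfold del: play.simps)
  also have "\<dots> \<le> measure_pmf.expectation ?P (\<lambda>\<Phi>. ?pot t \<Phi> + 1/4)"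
  proof (rule pmf_expectation_mono[OF finP])
    fix \<Phi> assume "\<Phi> \<in> set_pmf ?P"
    define h where "h = play f (table_strategy \<Phi>) t"
    have "h \<in> grid_histories N t"
      unfolding grid_histories_def h_def using set_strategy_table[OF N \<open>\<Phi> \<in> set_pmf ?P\<close>]
      by (simp add: length_play set_play_subset table_strategy_def)
    moreover have "play f (table_strategy (\<Phi>(t := y))) (Suc t) = h @ [(f h, y h)]" for y
    proof -
      have "play f (table_strategy (\<Phi>(t := y))) t = h"
        unfolding h_def by (rule play_table_strategy_cong) simp
      moreover have "length h = t" by (simp add: h_def length_play)
      ultimately show ?thesis by (simp add: Let_def table_strategy_def)
    qed
    ultimately show "measure_pmf.expectation ?Y (\<lambda>y. ?pot (Suc t) (\<Phi>(t := y))) \<le> ?pot t \<Phi> + 1/4"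
      using expected_potential_step_table[OF N] by (simp add: h_def del: play.simps)
  qed
  also have "\<dots> = measure_pmf.expectation ?P (?pot t) + 1/4"
    using pmf_expectation_affine[OF finP, of 1 "?pot t"] by simp
  also have "\<dots> \<le> real (Suc t) / 4"
    using Suc.IH by simp
  finally show ?case .
qed simp

lemma le_square_plus_inverse:
  fixes c x :: real
  assumes "c > 0"
  shows "x \<le> c * x\<^sup>2 + 1 / (4 * c)"
proof -
  have "c * x\<^sup>2 + 1 / (4 * c) - x = (2 * c * x - 1)\<^sup>2 / (4 * c)"
    using assms by (simp add: field_simps power2_eq_square)
  also have "\<dots> \<ge> 0" using assms by simp
  finally show ?thesis by simp
qed

lemma calib_sum_eq_sum_nth:
  "calib_sum d h = (\<Sum>t<length h. if snd (h ! t) = d then of_bool (fst (h ! t)) - d else 0)"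
  unfolding calib_sum_def sum_list_sum_nth by (simp add: atLeast0LessThan case_prod_unfold)

lemma calib_le_potential:
  assumes N: "N \<ge> 1" and T: "T \<ge> 1" and h: "length h = T"
  shows "calib N T h \<le> real N ^ 2 * potential N h / real T ^ 2 + 3 / (4 * real N)"
proof -
  have Np: "real N > 0" and Tp: "real T > 0" using N T by simp_all
  have "\<bar>calib_sum d h\<bar> \<le> real N ^ 2 / T * (excess N d h)\<^sup>2 + T / (4 * real N ^ 2)
          + forecast_count d h / (2 * real N)" for d
    using le_square_plus_inverse[of "real N ^ 2 / T" "excess N d h"] Np Tp
    by (simp add: excess_def)
  then have "(\<Sum>d\<in>grid N. \<bar>calib_sum d h\<bar>) \<le> (\<Sum>d\<in>grid N. real N ^ 2 / T * (excess N d h)\<^sup>2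
      + T / (4 * real N ^ 2) + forecast_count d h / (2 * real N))"
    by (rule sum_mono)
  also have "\<dots> = real N ^ 2 / T * potential N h + card (grid N) * (T / (4 * real N ^ 2))
          + (\<Sum>d\<in>grid N. forecast_count d h) / (2 * real N)"
    by (simp add: potential_def sum.distrib sum_distrib_left sum_divide_distrib)
  also have "\<dots> \<le> real N ^ 2 / T * potential N h + N * (T / (4 * real N ^ 2)) + T / (2 * real N)"
    using card_grid_le[of N] sum_forecast_count_le[of h N] potential_nonneg[of N h] h Np Tp
    by (intro add_mono mult_right_mono divide_right_mono) auto
  also have "\<dots> = real N ^ 2 / T * potential N h + 3 * T / (4 * real N)"
    using Np by (simp add: field_simps power2_eq_square)
  finally show ?thesis
    using Tp h by (simp add: calib_def calib_sum_eq_sum_nth field_simps power2_eq_square)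
qed

lemma expected_calib_le:
  assumes N: "N \<ge> 1" and T: "T \<ge> N ^ 3"
  shows "measure_pmf.expectation (calibrating_forecaster N T) (\<lambda>g. calib N T (play f g T)) \<le> 1 / real N"
proof -
  let ?P = "strategy_table N T"
  have Np: "real N > 0" using N by simp
  have T1: "T \<ge> 1" using N T by (metis one_le_power order_trans)
  then have Tp: "real T > 0" by simp
  have TN: "real N ^ 3 \<le> real T" using T by (metis of_nat_le_iff of_nat_power)
  have fin: "finite (set_pmf ?P)" by (rule finite_set_strategy_table[OF N])
  have "measure_pmf.expectation (calibrating_forecaster N T) (\<lambda>g. calib N T (play f g T))
      \<le> measure_pmf.expectation ?P
          (\<lambda>\<Phi>. real N ^ 2 / real T ^ 2 * potential N (play f (table_strategy \<Phi>) T) + 3 / (4 * real N))"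
    unfolding calibrating_forecaster_def integral_map_pmf
    using calib_le_potential[OF N T1 length_play] by (intro pmf_expectation_mono[OF fin]) simp
  also have "\<dots> \<le> real N ^ 2 / real T ^ 2 * (real T / 4) + 3 / (4 * real N)"
    unfolding pmf_expectation_affine[OF fin]
    using expected_potential_le[OF N, of T f] by (intro add_mono mult_left_mono) auto
  also have "\<dots> \<le> 1 / (4 * real N) + 3 / (4 * real N)"
    using Np Tp TN by (simp add: field_simps power2_eq_square power3_eq_cube)
  also have "\<dots> = 1 / real N" by simp
  finally show ?thesis .
qed

theorem theorem2:
  fixes N T :: nat
  assumes "N \<ge> 1" and "T \<ge> N ^ 3"
  shows "\<exists>\<tau>. fc_mixed N \<tau> \<and>
           (\<forall>\<sigma>. rain_mixed \<sigma> \<longrightarrow> expected_K N T \<sigma> \<tau> \<le> 1 / real N)"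
proof (intro exI conjI allI impI)
  let ?\<tau> = "calibrating_forecaster N T"
  show mixed: "fc_mixed N ?\<tau>" by (rule calibrating_forecaster_mixed[OF assms(1)])
  fix \<sigma> assume "rain_mixed \<sigma>"
  then have fin: "finite (set_pmf \<sigma>)" by (simp add: rain_mixed_def)
  have "expected_K N T \<sigma> ?\<tau>
      = measure_pmf.expectation \<sigma> (\<lambda>f. measure_pmf.expectation ?\<tau> (\<lambda>g. calib N T (play f g T)))"
    using mixed unfolding expected_K_def fc_mixed_def by (simp add: pmf_expectation_pair[OF fin])
  also have "\<dots> \<le> measure_pmf.expectation \<sigma> (\<lambda>_. 1 / real N)"
    by (intro pmf_expectation_mono[OF fin] expected_calib_le[OF assms])
  finally show "expected_K N T \<sigma> ?\<tau> \<le> 1 / real N" by simp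
qed

end
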